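(* Let $n\ge2$ and let $c_0,c_1:S^1\to\mathbb R^n$ be smooth regular closed curves. For every $\varepsilon>0$ there is a homotopy $C\in\mathbb C$ connecting $c_0$ to $c_1$ with $$E(C)=\int_I|\partial_vC|^2\,|\partial_\theta C|\,d\theta\,dv<\varepsilon .$$
   Context: $S^1=\mathbb R/2\pi\mathbb Z$, $I=S^1\times[0,1]$. The class $\mathbb C$ consists of all $C:I\to\mathbb R^n$ continuous on $I$, locally Lipschitz on $S^1\times(0,1)$, with $C(\cdot,0)=c_0$, $C(\cdot,1)=c_1$. $E$ is the energy of the (non-geometric in homotopies) metric $\langle h,k\rangle_c=\int_{S^1}\langle h,k\rangle|\dot c|\,d\theta$. *)

theory Defs
  imports "HOL-Analysis.Analysis"
begin

text \<open>Functions on S^1 = R/2piZ are represented as 2pi-periodic functions on R.\<close>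

definition periodic2pi :: "(real \<Rightarrow> 'a) \<Rightarrow> bool" where
  "periodic2pi f \<longleftrightarrow> (\<forall>t. f (t + 2 * pi) = f t)"

definition smooth_curve :: "(real \<Rightarrow> 'a::real_normed_vector) \<Rightarrow> bool" where
  "smooth_curve c \<longleftrightarrow> (\<exists>D :: nat \<Rightarrow> real \<Rightarrow> 'a. D 0 = c \<and>
      (\<forall>k t. (D k has_vector_derivative D (Suc k) t) (at t)))"

definition smooth_regular_closed_curve :: "(real \<Rightarrow> 'a::real_normed_vector) \<Rightarrow> bool" where
  "smooth_regular_closed_curve c \<longleftrightarrow> periodic2pi c \<and> smooth_curve c \<and>
      (\<forall>t. vector_derivative c (at t) \<noteq> 0)"

definition locally_lipschitz_on :: "'a::metric_space set \<Rightarrow> ('a \<Rightarrow> 'b::metric_space) \<Rightarrow> bool" where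
  "locally_lipschitz_on S f \<longleftrightarrow>
     (\<forall>p\<in>S. \<exists>e>0. \<exists>L. L-lipschitz_on (cball p e \<inter> S) f)"

definition homotopy_class :: "(real \<Rightarrow> 'a::real_normed_vector) \<Rightarrow> (real \<Rightarrow> 'a) \<Rightarrow>
    (real \<Rightarrow> real \<Rightarrow> 'a) set" where
  "homotopy_class c0 c1 = {C.
      (\<forall>\<theta> v. v \<in> {0..1} \<longrightarrow> C (\<theta> + 2 * pi) v = C \<theta> v) \<and>
      continuous_on (UNIV \<times> {0..1}) (\<lambda>(\<theta>, v). C \<theta> v) \<and>
      locally_lipschitz_on (UNIV \<times> {0<..<1}) (\<lambda>(\<theta>, v). C \<theta> v) \<and>
      (\<forall>\<theta>. C \<theta> 0 = c0 \<theta>) \<and> (\<forall>\<theta>. C \<theta> 1 = c1 \<theta>)}"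

text \<open>Partial derivatives (taken to be 0 where they do not exist; by Rademacher
  they exist almost everywhere for locally Lipschitz C).\<close>
definition partial_theta :: "(real \<Rightarrow> real \<Rightarrow> 'a::real_normed_vector) \<Rightarrow> real \<Rightarrow> real \<Rightarrow> 'a" where
  "partial_theta C \<theta> v = (if (\<lambda>s. C s v) differentiable (at \<theta>)
       then vector_derivative (\<lambda>s. C s v) (at \<theta>) else 0)"

definition partial_v :: "(real \<Rightarrow> real \<Rightarrow> 'a::real_normed_vector) \<Rightarrow> real \<Rightarrow> real \<Rightarrow> 'a" where
  "partial_v C \<theta> v = (if (\<lambda>s. C \<theta> s) differentiable (at v)
       then vector_derivative (\<lambda>s. C \<theta> s) (at v) else 0)"

definition energy_density :: "(real \<Rightarrow> real \<Rightarrow> 'a::real_normed_vector) \<Rightarrow> real \<times> real \<Rightarrow> real" where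
  "energy_density C p =
     (norm (partial_v C (fst p) (snd p)))\<^sup>2 * norm (partial_theta C (fst p) (snd p))"

definition energy :: "(real \<Rightarrow> real \<Rightarrow> 'a::real_normed_vector) \<Rightarrow> ennreal" where
  "energy C = (\<integral>\<^sup>+ p \<in> {0..2*pi} \<times> {0..1}. ennreal (energy_density C p)
      \<partial>(lborel :: (real \<times> real) measure))"

end

theory Submission
  imports Defs
begin

(* Cut the circle into M cells of width d = 2 pi / M and let u be the position of theta inside its
   cell.  The homotopy is C(theta, v) = (1 - S) c0(X) + S c1(X), where the reparametrisation
   X = theta + d G(u, v) stays within d of theta and S(u, v) is a weight; G and S are piecewise
   linear.  Let L be a Lipschitz constant of c0 and c1 and K a bound for |c0 - c1|.  Then
   |d_theta C| = O(L + K / d) everywhere, and at almost every point one of two things happens: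
   either S is locally constant in v, so that |d_v C| <= 10 d L, or C is locally constant in theta.
   In both cases |d_v C|^2 |d_theta C| = O(d), hence E(C) = O(d) tends to 0 as M grows. *)

section \<open>Difference quotients and the energy density\<close>

lemma has_vector_derivative_iff_difference_quotient:
  fixes f :: "real \<Rightarrow> 'a::real_normed_vector"
  shows "(f has_vector_derivative L) (at x) \<longleftrightarrow> ((\<lambda>h. (f (x + h) - f x) /\<^sub>R h) \<longlongrightarrow> L) (at 0)"
proof -
  have "norm (f (x + h) - f x - h *\<^sub>R L) / norm h = norm ((f (x + h) - f x) /\<^sub>R h - L)"
    if "h \<noteq> 0" for h
  proof -
    have "(f (x + h) - f x) /\<^sub>R h - L = (1 / h) *\<^sub>R (f (x + h) - f x - h *\<^sub>R L)"
      using that by (simp add: algebra_simps inverse_eq_divide)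
    then show ?thesis by (simp add: divide_inverse_commute)
  qed
  then have "((\<lambda>h. norm (f (x + h) - f x - h *\<^sub>R L) / norm h) \<longlongrightarrow> 0) (at 0) \<longleftrightarrow>
      ((\<lambda>h. norm ((f (x + h) - f x) /\<^sub>R h - L)) \<longlongrightarrow> 0) (at 0)"
    by (intro tendsto_cong) (simp add: eventually_at_filter)
  then show ?thesis
    unfolding has_vector_derivative_def has_derivative_at
    by (simp add: bounded_linear_scaleR_left tendsto_norm_zero_iff LIM_zero_iff)
qed

lemma ex_tendsto_iff_cauchy_filter:
  fixes g :: "'b \<Rightarrow> 'a::banach"
  assumes "F \<noteq> bot"
  shows "(\<exists>L. (g \<longlongrightarrow> L) F) \<longleftrightarrow> cauchy_filter (filtermap g F)"
proof
  show "\<exists>L. (g \<longlongrightarrow> L) F" if "cauchy_filter (filtermap g F)"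
    using cauchy_filter_complete_converges[OF that complete_UNIV] assms
    by (simp add: filterlim_def filtermap_bot_iff)
qed (auto simp: filterlim_def intro: nhds_imp_cauchy_filter)

lemma cauchy_filter_at_0_iff:
  fixes g :: "real \<Rightarrow> 'a::metric_space"
  shows "cauchy_filter (filtermap g (at 0)) \<longleftrightarrow>
    (\<forall>m::nat. \<exists>n::nat. \<forall>h k.
      0 < \<bar>h\<bar> \<and> \<bar>h\<bar> < inverse (Suc n) \<and> 0 < \<bar>k\<bar> \<and> \<bar>k\<bar> < inverse (Suc n) \<longrightarrow>
      dist (g h) (g k) \<le> inverse (Suc m))"
  unfolding cauchy_filter_metric_filtermap
proof (intro iffI allI impI)
  fix m :: nat
  assume Cauchy: "\<forall>e>0. \<exists>P. eventually P (at 0) \<and> (\<forall>h k. P h \<and> P k \<longrightarrow> dist (g h) (g k) < e)"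
  have "0 < inverse (real (Suc m))"
    by simp
  then obtain P where "eventually P (at 0)" and P: "\<And>h k. P h \<Longrightarrow> P k \<Longrightarrow> dist (g h) (g k) < inverse (Suc m)"
    using Cauchy by blast
  then obtain \<delta> where "0 < \<delta>" and \<delta>: "\<And>h. h \<noteq> 0 \<Longrightarrow> \<bar>h\<bar> < \<delta> \<Longrightarrow> P h"
    unfolding eventually_at by (auto simp: dist_real_def)
  obtain n where "inverse (Suc n) < \<delta>"
    using reals_Archimedean[OF \<open>0 < \<delta>\<close>] by blast
  then show "\<exists>n::nat. \<forall>h k. 0 < \<bar>h\<bar> \<and> \<bar>h\<bar> < inverse (Suc n) \<and> 0 < \<bar>k\<bar> \<and> \<bar>k\<bar> < inverse (Suc n) \<longrightarrow>
      dist (g h) (g k) \<le> inverse (Suc m)"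
    using P \<delta> by (intro exI[of _ n]) (auto intro: less_imp_le)
next
  fix e :: real
  assume "0 < e" and Cauchy: "\<forall>m::nat. \<exists>n::nat. \<forall>h k.
    0 < \<bar>h\<bar> \<and> \<bar>h\<bar> < inverse (Suc n) \<and> 0 < \<bar>k\<bar> \<and> \<bar>k\<bar> < inverse (Suc n) \<longrightarrow>
    dist (g h) (g k) \<le> inverse (Suc m)"
  obtain m where m: "inverse (Suc m) < e"
    using reals_Archimedean[OF \<open>0 < e\<close>] by blast
  obtain n where n: "\<forall>h k. 0 < \<bar>h\<bar> \<and> \<bar>h\<bar> < inverse (Suc n) \<and> 0 < \<bar>k\<bar> \<and> \<bar>k\<bar> < inverse (Suc n) \<longrightarrow>
      dist (g h) (g k) \<le> inverse (Suc m)"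
    using Cauchy by blast
  have "eventually (\<lambda>h. 0 < \<bar>h\<bar> \<and> \<bar>h\<bar> < inverse (Suc n)) (at 0)"
    unfolding eventually_at by (intro exI[of _ "inverse (Suc n)"]) (auto simp: dist_real_def)
  then show "\<exists>P. eventually P (at 0) \<and> (\<forall>h k. P h \<and> P k \<longrightarrow> dist (g h) (g k) < e)"
    using n m by (intro exI conjI) (auto intro: le_less_trans)
qed

lemma differentiable_at_iff_Cauchy_difference_quotients:
  fixes f :: "real \<Rightarrow> 'a::banach"
  shows "f differentiable (at x) \<longleftrightarrow>
    (\<forall>m::nat. \<exists>n::nat. \<forall>h k.
      0 < \<bar>h\<bar> \<and> \<bar>h\<bar> < inverse (Suc n) \<and> 0 < \<bar>k\<bar> \<and> \<bar>k\<bar> < inverse (Suc n) \<longrightarrow>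
      dist ((f (x + h) - f x) /\<^sub>R h) ((f (x + k) - f x) /\<^sub>R k) \<le> inverse (Suc m))"
proof -
  let ?q = "\<lambda>h. (f (x + h) - f x) /\<^sub>R h"
  have "f differentiable (at x) \<longleftrightarrow> (\<exists>L. (?q \<longlongrightarrow> L) (at 0))"
    using has_vector_derivative_iff_difference_quotient vector_derivative_works differentiableI_vector
    by metis
  also have "\<dots> \<longleftrightarrow> cauchy_filter (filtermap ?q (at 0))"
    by (rule ex_tendsto_iff_cauchy_filter) simp
  finally show ?thesis
    unfolding cauchy_filter_at_0_iff .
qed

lemma continuous_on_difference_quotient:
  fixes F :: "real \<Rightarrow> real \<Rightarrow> 'a::real_normed_vector"
  assumes cont: "continuous_on UNIV (\<lambda>p. F (fst p) (snd p))"
  shows "continuous_on UNIV (\<lambda>p. (F (fst p + h) (snd p) - F (fst p) (snd p)) /\<^sub>R h)"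
proof -
  have "continuous_on UNIV (\<lambda>p. F (fst p + h) (snd p))"
    by (rule continuous_on_compose2[OF cont, where f = "\<lambda>p. (fst p + h, snd p)", simplified])
      (auto intro!: continuous_intros)
  then show ?thesis
    using cont by (intro continuous_intros) auto
qed

lemma sets_borel_differentiability_points:
  fixes F :: "real \<Rightarrow> real \<Rightarrow> 'a::banach"
  assumes cont: "continuous_on UNIV (\<lambda>p. F (fst p) (snd p))"
  shows "{p. (\<lambda>s. F s (snd p)) differentiable (at (fst p))} \<in> sets borel"
proof -
  define q where "q h p = (F (fst p + h) (snd p) - F (fst p) (snd p)) /\<^sub>R h" for h p
  have q_cont: "continuous_on UNIV (q h)" for h
    unfolding q_def using continuous_on_difference_quotient[OF cont] .
  define Z where "Z m n = {p. \<forall>h k. 0 < \<bar>h\<bar> \<and> \<bar>h\<bar> < inverse (Suc n) \<and> 0 < \<bar>k\<bar> \<and> \<bar>k\<bar> < inverse (Suc n) \<longrightarrow>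
     dist (q h p) (q k p) \<le> inverse (Suc m)}" for m n :: nat
  have "closed (Z m n)" for m n
    unfolding Z_def by (intro closed_Collect_all closed_Collect_imp closed_Collect_le continuous_intros q_cont) auto
  then have "(\<Inter>m. \<Union>n. Z m n) \<in> sets borel"
    by (intro sets.countable_INT' sets.countable_UN') auto
  also have "(\<Inter>m. \<Union>n. Z m n) = {p. (\<lambda>s. F s (snd p)) differentiable (at (fst p))}"
    unfolding Z_def q_def differentiable_at_iff_Cauchy_difference_quotients by auto
  finally show ?thesis .
qed

lemma borel_measurable_partial_theta:
  fixes F :: "real \<Rightarrow> real \<Rightarrow> 'a::banach"
  assumes cont: "continuous_on UNIV (\<lambda>p. F (fst p) (snd p))"
  shows "(\<lambda>p. partial_theta F (fst p) (snd p)) \<in> borel_measurable borel"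
proof -
  define q where "q h p = (F (fst p + h) (snd p) - F (fst p) (snd p)) /\<^sub>R h" for h p
  have q_cont: "continuous_on UNIV (q h)" for h
    unfolding q_def using continuous_on_difference_quotient[OF cont] .
  define D where "D = {p. (\<lambda>s. F s (snd p)) differentiable (at (fst p))}"
  define approx where "approx n p = (if p \<in> D then q (inverse (Suc n)) p else 0)" for n p
  show ?thesis
  proof (rule borel_measurable_LIMSEQ_metric[of approx])
    show "approx n \<in> borel_measurable borel" for n
      unfolding approx_def D_def using sets_borel_differentiability_points[OF cont] q_cont
      by (intro measurable_If_set borel_measurable_continuous_onI) auto
  next
    fix p :: "real \<times> real"
    let ?f = "\<lambda>s. F s (snd p)"
    show "(\<lambda>n. approx n p) \<longlonglongrightarrow> partial_theta F (fst p) (snd p)"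
    proof (cases "p \<in> D")
      case True
      then have "(?f has_vector_derivative vector_derivative ?f (at (fst p))) (at (fst p))"
        unfolding D_def using vector_derivative_works by blast
      then have "((\<lambda>h. (?f (fst p + h) - ?f (fst p)) /\<^sub>R h) \<longlongrightarrow> vector_derivative ?f (at (fst p))) (at 0)"
        using has_vector_derivative_iff_difference_quotient[of ?f] by simp
      moreover have "filterlim (\<lambda>n. inverse (real (Suc n))) (at 0) sequentially"
        unfolding filterlim_at using LIMSEQ_inverse_real_of_nat by auto
      ultimately have "(\<lambda>n. q (inverse (real (Suc n))) p) \<longlonglongrightarrow> vector_derivative ?f (at (fst p))"
        unfolding q_def by (rule filterlim_compose)
      then show ?thesis
        using True unfolding approx_def partial_theta_def D_def by simp
    qed (simp add: approx_def partial_theta_def D_def)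
  qed
qed

lemma borel_measurable_energy_density:
  fixes C :: "real \<Rightarrow> real \<Rightarrow> 'a::banach"
  assumes cont: "continuous_on UNIV (\<lambda>p. C (fst p) (snd p))"
  shows "energy_density C \<in> borel_measurable lborel"
proof -
  have "continuous_on UNIV (\<lambda>p. C (snd p) (fst p))"
    by (rule continuous_on_compose2[OF cont, where f = prod.swap, simplified])
      (auto intro!: continuous_intros)
  then have "(\<lambda>p. partial_theta (\<lambda>v \<theta>. C \<theta> v) (fst p) (snd p)) \<circ> prod.swap \<in> borel_measurable borel"
    by (intro measurable_comp[OF _ borel_measurable_partial_theta])
      (intro borel_measurable_continuous_onI continuous_intros)
  then have "(\<lambda>p. partial_theta (\<lambda>v \<theta>. C \<theta> v) (snd p) (fst p)) \<in> borel_measurable borel"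
    by (simp add: comp_def)
  moreover have "partial_theta (\<lambda>v \<theta>. C \<theta> v) v \<theta> = partial_v C \<theta> v" for \<theta> v
    unfolding partial_v_def partial_theta_def by simp
  ultimately show ?thesis
    using borel_measurable_partial_theta[OF cont] unfolding energy_density_def by simp
qed

lemma norm_vector_derivative_le_one_sided:
  fixes f :: "real \<Rightarrow> 'a::real_normed_vector"
  assumes diff: "f differentiable (at x)" and "0 < r" and s: "s = 1 \<or> s = -1"
    and bound: "\<And>h. 0 < h \<Longrightarrow> h < r \<Longrightarrow> norm (f (x + s * h) - f x) \<le> A * h"
  shows "norm (vector_derivative f (at x)) \<le> A"
proof -
  let ?q = "\<lambda>h. (f (x + h) - f x) /\<^sub>R h"
  have "(f has_vector_derivative vector_derivative f (at x)) (at x)"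
    using diff vector_derivative_works by blast
  then have "(?q \<longlongrightarrow> vector_derivative f (at x)) (at 0)"
    using has_vector_derivative_iff_difference_quotient by blast
  moreover have "filterlim (\<lambda>h. s * h) (at 0) (at_right 0)"
    using s unfolding filterlim_at
    by (auto intro!: tendsto_eq_intros eventually_at_rightI[of 0 1] simp: tendsto_mult_right_zero)
  ultimately have lim: "((\<lambda>h. ?q (s * h)) \<longlongrightarrow> vector_derivative f (at x)) (at_right 0)"
    by (rule filterlim_compose)
  have "norm (?q (s * h)) \<le> A" if "0 < h" "h < r" for h
  proof -
    have "norm (?q (s * h)) = norm (f (x + s * h) - f x) / h"
      using s that by (auto simp: divide_inverse_commute)
    then show ?thesis
      using bound[OF that] that by (simp add: divide_le_eq)
  qed
  then have "\<forall>\<^sub>F h in at_right 0. norm (?q (s * h)) \<le> A"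
    unfolding eventually_at_right_field using \<open>0 < r\<close> by blast
  then show ?thesis
    using Lim_norm_ubound[OF _ lim] by simp
qed

lemma energy_density_le_of_one_sided_increments:
  fixes C :: "real \<Rightarrow> real \<Rightarrow> 'a::real_normed_vector"
  assumes "0 < r" "0 \<le> A" "0 \<le> B" "s = 1 \<or> s = -1"
    and theta_incr: "\<And>h. 0 < h \<Longrightarrow> h < r \<Longrightarrow> norm (C (\<theta> + h) v - C \<theta> v) \<le> A * h"
    and v_incr: "\<And>h. 0 < h \<Longrightarrow> h < r \<Longrightarrow> norm (C \<theta> (v + s * h) - C \<theta> v) \<le> B * h"
  shows "energy_density C (\<theta>, v) \<le> A * B\<^sup>2"
proof -
  have "norm (partial_theta C \<theta> v) \<le> A"
    using norm_vector_derivative_le_one_sided[of "\<lambda>t. C t v" \<theta> r 1 A] assms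
    by (simp add: partial_theta_def)
  moreover have "norm (partial_v C \<theta> v) \<le> B"
    using norm_vector_derivative_le_one_sided[of "\<lambda>t. C \<theta> t" v r s B] assms
    by (simp add: partial_v_def)
  ultimately have "(norm (partial_v C \<theta> v))\<^sup>2 * norm (partial_theta C \<theta> v) \<le> B\<^sup>2 * A"
    by (intro mult_mono power_mono) auto
  then show ?thesis
    by (simp add: energy_density_def mult.commute)
qed

section \<open>Piecewise linear profiles\<close>

lemma abs_max_diff_le: "\<bar>max a b - max c d\<bar> \<le> max \<bar>a - c\<bar> \<bar>b - d\<bar>" for a b c d :: real
  by (auto simp: max_def abs_if)

lemma abs_min_diff_le: "\<bar>min a b - min c d\<bar> \<le> max \<bar>a - c\<bar> \<bar>b - d\<bar>" for a b c d :: real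
  by (auto simp: min_def max_def abs_if)

definition ramp :: "real \<Rightarrow> real" where
  "ramp x = max 0 (min 1 x)"

lemma ramp_bounds: "0 \<le> ramp x" "ramp x \<le> 1"
  unfolding ramp_def by auto

lemma ramp_mono: "a \<le> b \<Longrightarrow> ramp a \<le> ramp b"
  unfolding ramp_def by auto

lemma abs_ramp_diff_le: "\<bar>ramp a - ramp b\<bar> \<le> \<bar>a - b\<bar>"
  unfolding ramp_def using abs_max_diff_le[of 0 "min 1 a" 0 "min 1 b"] abs_min_diff_le[of 1 a 1 b]
  by auto

lemma abs_ramp_affine_diff_le:
  assumes "0 \<le> c"
  shows "\<bar>ramp (c * a + q) - ramp (c * b + q)\<bar> \<le> c * \<bar>a - b\<bar>"
proof -
  have "\<bar>ramp (c * a + q) - ramp (c * b + q)\<bar> \<le> \<bar>(c * a + q) - (c * b + q)\<bar>"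
    by (rule abs_ramp_diff_le)
  also have "\<dots> = c * \<bar>a - b\<bar>"
    using assms by (simp add: abs_mult right_diff_distrib[symmetric])
  finally show ?thesis .
qed

definition quarter_ramp :: "real \<Rightarrow> real \<Rightarrow> real" where
  "quarter_ramp q u = ramp (4 * u - q)"

definition fifth_ramp :: "real \<Rightarrow> real \<Rightarrow> real" where
  "fifth_ramp q v = ramp (5 * v - q)"

lemma quarter_ramp_bounds: "0 \<le> quarter_ramp q u" "quarter_ramp q u \<le> 1"
  unfolding quarter_ramp_def using ramp_bounds by auto

lemma fifth_ramp_bounds: "0 \<le> fifth_ramp q v" "fifth_ramp q v \<le> 1"
  unfolding fifth_ramp_def using ramp_bounds by auto

lemma abs_quarter_ramp_diff_le: "\<bar>quarter_ramp q u - quarter_ramp q u'\<bar> \<le> 4 * \<bar>u - u'\<bar>"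
  unfolding quarter_ramp_def using abs_ramp_affine_diff_le[of 4 u "-q" u'] by simp

lemma abs_fifth_ramp_diff_le: "\<bar>fifth_ramp q v - fifth_ramp q v'\<bar> \<le> 5 * \<bar>v - v'\<bar>"
  unfolding fifth_ramp_def using abs_ramp_affine_diff_le[of 5 v "-q" v'] by simp

(* u is the position in a cell and v the homotopy time, which runs through five phases of length
   1/5.  The curve parameter is moved from u towards fold_map u v, to the extent plateau v: in the
   first phase the cell is folded onto quarter_ramp 2 u, which is stationary for u in [0, 1/2] and
   [3/4, 1]; in the third the fold moves to quarter_ramp 0 u, stationary on [1/4, 1]; in the last
   the cell is unfolded.  In the two mixing phases in between, the weight mix_weight u v of c1
   rises to gate u and then to 1.  As gate vanishes on [1/2, 3/4] and equals 1 on [0, 1/4], the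
   weight only changes where the fold is stationary. *)
definition gate :: "real \<Rightarrow> real" where
  "gate u = 1 - quarter_ramp 1 u + quarter_ramp 3 u"

definition plateau :: "real \<Rightarrow> real" where
  "plateau v = min (ramp (5 * v)) (ramp (5 - 5 * v))"

definition fold_map :: "real \<Rightarrow> real \<Rightarrow> real" where
  "fold_map u v = max (min (quarter_ramp 0 u) (fifth_ramp 2 v)) (quarter_ramp 2 u)"

definition fold_shift :: "real \<Rightarrow> real \<Rightarrow> real" where
  "fold_shift u v = plateau v * (fold_map u v - u)"

definition mix_weight :: "real \<Rightarrow> real \<Rightarrow> real" where
  "mix_weight u v = max (fifth_ramp 3 v) (min (fifth_ramp 1 v) (gate u))"

lemma gate_bounds: "0 \<le> gate u" "gate u \<le> 1"
proof -
  have "quarter_ramp 3 u > 0 \<Longrightarrow> quarter_ramp 1 u = 1"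
    unfolding quarter_ramp_def ramp_def by auto
  then show "0 \<le> gate u" "gate u \<le> 1"
    unfolding gate_def using quarter_ramp_bounds[of 1 u] quarter_ramp_bounds[of 3 u]
    by (cases "quarter_ramp 3 u > 0"; auto)+
qed

lemma abs_gate_diff_le: "\<bar>gate u - gate u'\<bar> \<le> 8 * \<bar>u - u'\<bar>"
  unfolding gate_def using abs_quarter_ramp_diff_le[of 1 u u'] abs_quarter_ramp_diff_le[of 3 u u']
  by linarith

lemma plateau_bounds: "0 \<le> plateau v" "plateau v \<le> 1"
  unfolding plateau_def using ramp_bounds by (auto simp: min_def)

lemma abs_plateau_diff_le: "\<bar>plateau v - plateau v'\<bar> \<le> 5 * \<bar>v - v'\<bar>"
proof -
  have "\<bar>plateau v - plateau v'\<bar> \<le> max \<bar>ramp (5 * v) - ramp (5 * v')\<bar> \<bar>ramp (5 - 5 * v) - ramp (5 - 5 * v')\<bar>"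
    unfolding plateau_def by (rule abs_min_diff_le)
  moreover have "\<bar>ramp (5 - 5 * v) - ramp (5 - 5 * v')\<bar> \<le> 5 * \<bar>v - v'\<bar>"
    using abs_ramp_affine_diff_le[of 5 "-v" 5 "-v'"] by (simp add: abs_minus_commute)
  ultimately show ?thesis
    using abs_ramp_affine_diff_le[of 5 v 0 v'] by (auto simp: le_max_iff_disj)
qed

lemma fold_map_bounds: "0 \<le> fold_map u v" "fold_map u v \<le> 1"
  unfolding fold_map_def using quarter_ramp_bounds fifth_ramp_bounds by (auto simp: min_def max_def)

lemma abs_fold_map_diff_le_u: "\<bar>fold_map u v - fold_map u' v\<bar> \<le> 4 * \<bar>u - u'\<bar>"
proof -
  have "\<bar>fold_map u v - fold_map u' v\<bar> \<le> max \<bar>min (quarter_ramp 0 u) (fifth_ramp 2 v) -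
      min (quarter_ramp 0 u') (fifth_ramp 2 v)\<bar> \<bar>quarter_ramp 2 u - quarter_ramp 2 u'\<bar>"
    unfolding fold_map_def by (rule abs_max_diff_le)
  also have "\<dots> \<le> 4 * \<bar>u - u'\<bar>"
    using abs_min_diff_le[of "quarter_ramp 0 u" "fifth_ramp 2 v" "quarter_ramp 0 u'" "fifth_ramp 2 v"]
      abs_quarter_ramp_diff_le[of 0 u u'] abs_quarter_ramp_diff_le[of 2 u u']
    by auto
  finally show ?thesis .
qed

lemma abs_fold_map_diff_le_v: "\<bar>fold_map u v - fold_map u v'\<bar> \<le> 5 * \<bar>v - v'\<bar>"
proof -
  have "\<bar>fold_map u v - fold_map u v'\<bar> \<le> max \<bar>min (quarter_ramp 0 u) (fifth_ramp 2 v) -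
      min (quarter_ramp 0 u) (fifth_ramp 2 v')\<bar> \<bar>quarter_ramp 2 u - quarter_ramp 2 u\<bar>"
    unfolding fold_map_def by (rule abs_max_diff_le)
  also have "\<dots> \<le> 5 * \<bar>v - v'\<bar>"
    using abs_min_diff_le[of "quarter_ramp 0 u" "fifth_ramp 2 v" "quarter_ramp 0 u" "fifth_ramp 2 v'"]
      abs_fifth_ramp_diff_le[of 2 v v']
    by auto
  finally show ?thesis .
qed

lemma abs_fold_shift_le:
  assumes "0 \<le> u" "u \<le> 1"
  shows "\<bar>fold_shift u v\<bar> \<le> 1"
proof -
  have "\<bar>fold_shift u v\<bar> = plateau v * \<bar>fold_map u v - u\<bar>"
    unfolding fold_shift_def using plateau_bounds by (simp add: abs_mult)
  also have "\<dots> \<le> 1 * 1"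
    using plateau_bounds[of v] fold_map_bounds[of u v] assms by (intro mult_mono) auto
  finally show ?thesis by simp
qed

lemma abs_fold_shift_diff_le_u: "\<bar>fold_shift u v - fold_shift u' v\<bar> \<le> 5 * \<bar>u - u'\<bar>"
proof -
  have "fold_shift u v - fold_shift u' v = plateau v * ((fold_map u v - fold_map u' v) - (u - u'))"
    unfolding fold_shift_def by (simp add: algebra_simps)
  then have "\<bar>fold_shift u v - fold_shift u' v\<bar> = plateau v * \<bar>(fold_map u v - fold_map u' v) - (u - u')\<bar>"
    using plateau_bounds[of v] by (simp add: abs_mult)
  also have "\<dots> \<le> 1 * (5 * \<bar>u - u'\<bar>)"
  proof (rule mult_mono)
    show "\<bar>(fold_map u v - fold_map u' v) - (u - u')\<bar> \<le> 5 * \<bar>u - u'\<bar>"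
      by (rule order_trans[OF abs_triangle_ineq4]) (use abs_fold_map_diff_le_u[of u v u'] in simp)
  qed (use plateau_bounds in auto)
  finally show ?thesis by simp
qed

lemma abs_fold_shift_diff_le_v:
  assumes "0 \<le> u" "u \<le> 1"
  shows "\<bar>fold_shift u v - fold_shift u v'\<bar> \<le> 10 * \<bar>v - v'\<bar>"
proof -
  have "fold_shift u v - fold_shift u v' =
      (plateau v - plateau v') * (fold_map u v - u) + plateau v' * (fold_map u v - fold_map u v')"
    unfolding fold_shift_def by (simp add: algebra_simps)
  then have "\<bar>fold_shift u v - fold_shift u v'\<bar> \<le>
      \<bar>plateau v - plateau v'\<bar> * \<bar>fold_map u v - u\<bar> + plateau v' * \<bar>fold_map u v - fold_map u v'\<bar>"
    using plateau_bounds by (simp add: abs_mult) (metis abs_mult abs_of_nonneg abs_triangle_ineq)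
  also have "\<dots> \<le> (5 * \<bar>v - v'\<bar>) * 1 + 1 * (5 * \<bar>v - v'\<bar>)"
    using abs_plateau_diff_le[of v v'] fold_map_bounds[of u v] assms plateau_bounds[of v']
      abs_fold_map_diff_le_v[of u v v']
    by (intro add_mono mult_mono) auto
  finally show ?thesis by simp
qed

lemma mix_weight_bounds: "0 \<le> mix_weight u v" "mix_weight u v \<le> 1"
  unfolding mix_weight_def using fifth_ramp_bounds gate_bounds by (auto simp: min_def max_def)

lemma abs_mix_weight_diff_le_u: "\<bar>mix_weight u v - mix_weight u' v\<bar> \<le> 8 * \<bar>u - u'\<bar>"
proof -
  have "\<bar>mix_weight u v - mix_weight u' v\<bar> \<le> max \<bar>fifth_ramp 3 v - fifth_ramp 3 v\<bar>
      \<bar>min (fifth_ramp 1 v) (gate u) - min (fifth_ramp 1 v) (gate u')\<bar>"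
    unfolding mix_weight_def by (rule abs_max_diff_le)
  also have "\<dots> \<le> 8 * \<bar>u - u'\<bar>"
    using abs_min_diff_le[of "fifth_ramp 1 v" "gate u" "fifth_ramp 1 v" "gate u'"] abs_gate_diff_le[of u u']
    by auto
  finally show ?thesis .
qed

lemma abs_mix_weight_diff_le_v: "\<bar>mix_weight u v - mix_weight u v'\<bar> \<le> 5 * \<bar>v - v'\<bar>"
proof -
  have "\<bar>mix_weight u v - mix_weight u v'\<bar> \<le> max \<bar>fifth_ramp 3 v - fifth_ramp 3 v'\<bar>
      \<bar>min (fifth_ramp 1 v) (gate u) - min (fifth_ramp 1 v') (gate u)\<bar>"
    unfolding mix_weight_def by (rule abs_max_diff_le)
  also have "\<dots> \<le> 5 * \<bar>v - v'\<bar>"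
    using abs_min_diff_le[of "fifth_ramp 1 v" "gate u" "fifth_ramp 1 v'" "gate u"]
      abs_fifth_ramp_diff_le[of 3 v v'] abs_fifth_ramp_diff_le[of 1 v v']
    by auto
  finally show ?thesis .
qed

lemma fold_shift_cell_ends: "fold_shift 0 v = 0" "fold_shift 1 v = 0"
  unfolding fold_shift_def fold_map_def quarter_ramp_def ramp_def
  using fifth_ramp_bounds by (auto simp: min_def max_def)

lemma mix_weight_cell_ends: "mix_weight 0 v = mix_weight 1 v"
  unfolding mix_weight_def gate_def quarter_ramp_def ramp_def by simp

lemma profiles_at_start: "fold_shift u 0 = 0" "mix_weight u 0 = 0"
  unfolding fold_shift_def mix_weight_def plateau_def fifth_ramp_def ramp_def
  using gate_bounds[of u] by (auto simp: min_def max_def)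

lemma profiles_at_end: "fold_shift u 1 = 0" "mix_weight u 1 = 1"
  unfolding fold_shift_def mix_weight_def plateau_def fifth_ramp_def ramp_def
  using gate_bounds[of u] by (auto simp: min_def max_def)

definition frozen_in_v :: "real \<Rightarrow> real \<Rightarrow> bool" where
  "frozen_in_v u v \<longleftrightarrow>
     (\<exists>r>0. \<exists>s\<in>{1, -1}. \<forall>h. 0 < h \<and> h < r \<longrightarrow> mix_weight u (v + s * h) = mix_weight u v)"

(* The last condition says that the curve parameter u + fold_shift u v does not move with u. *)
definition frozen_in_u :: "real \<Rightarrow> real \<Rightarrow> bool" where
  "frozen_in_u u v \<longleftrightarrow>
     (\<exists>r>0. r \<le> 1 - u \<and> (\<forall>h. 0 < h \<and> h < r \<longrightarrow>
        mix_weight (u + h) v = mix_weight u v \<and> h + fold_shift (u + h) v = fold_shift u v))"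

lemma frozen_in_vI:
  assumes "0 < r" "s = 1 \<or> s = -1"
    and "\<And>h. 0 < h \<Longrightarrow> h < r \<Longrightarrow> mix_weight u (v + s * h) = mix_weight u v"
  shows "frozen_in_v u v"
  unfolding frozen_in_v_def using assms by blast

lemma frozen_in_uI:
  assumes "0 < r" "r \<le> 1 - u" "plateau v = 1"
    and "\<And>h. 0 < h \<Longrightarrow> h < r \<Longrightarrow> mix_weight (u + h) v = mix_weight u v \<and> fold_map (u + h) v = fold_map u v"
  shows "frozen_in_u u v"
  unfolding frozen_in_u_def fold_shift_def using assms by (intro exI[of _ r]) auto

lemma mix_weight_const_outside_mixing:
  assumes "(v \<le> 1/5 \<and> v' \<le> 1/5) \<or> (2/5 \<le> v \<and> v \<le> 3/5 \<and> 2/5 \<le> v' \<and> v' \<le> 3/5) \<or> (4/5 \<le> v \<and> 4/5 \<le> v')"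
  shows "mix_weight u v' = mix_weight u v"
  using assms gate_bounds[of u] unfolding mix_weight_def fifth_ramp_def ramp_def
  by (auto simp: min_def max_def)

lemma first_mixing_phase:
  assumes "1/5 \<le> v" "v \<le> 2/5"
  shows "plateau v = 1" "fifth_ramp 3 v = 0" "fold_map u v = quarter_ramp 2 u"
proof -
  have "fifth_ramp 2 v = 0"
    using assms unfolding fifth_ramp_def ramp_def by auto
  then show "fold_map u v = quarter_ramp 2 u"
    using quarter_ramp_bounds[of 0 u] quarter_ramp_bounds[of 2 u] unfolding fold_map_def by auto
qed (use assms in \<open>auto simp: plateau_def fifth_ramp_def ramp_def\<close>)

lemma second_mixing_phase:
  assumes "3/5 \<le> v" "v \<le> 4/5"
  shows "plateau v = 1" "fifth_ramp 1 v = 1" "fold_map u v = quarter_ramp 0 u"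
proof -
  have "fifth_ramp 2 v = 1"
    using assms unfolding fifth_ramp_def ramp_def by auto
  moreover have "quarter_ramp 2 u \<le> quarter_ramp 0 u"
    unfolding quarter_ramp_def by (rule ramp_mono) simp
  ultimately show "fold_map u v = quarter_ramp 0 u"
    using quarter_ramp_bounds[of 0 u] unfolding fold_map_def by auto
qed (use assms in \<open>auto simp: plateau_def fifth_ramp_def ramp_def\<close>)

lemma mix_weight_const_in_v_first_mixing:
  assumes "1/5 \<le> v" "v \<le> v'" "v' \<le> 2/5" "gate u \<le> fifth_ramp 1 v"
  shows "mix_weight u v' = mix_weight u v"
proof -
  have "fifth_ramp 1 v \<le> fifth_ramp 1 v'"
    unfolding fifth_ramp_def using assms by (intro ramp_mono) auto
  then show ?thesis
    using assms first_mixing_phase(2)[of v] first_mixing_phase(2)[of v'] unfolding mix_weight_def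
    by (auto simp: min_def max_def)
qed

lemma mix_weight_const_in_v_second_mixing:
  assumes "3/5 \<le> v'" "v' \<le> v" "v \<le> 4/5" "fifth_ramp 3 v \<le> gate u"
  shows "mix_weight u v' = mix_weight u v"
proof -
  have "fifth_ramp 3 v' \<le> fifth_ramp 3 v"
    unfolding fifth_ramp_def using assms by (intro ramp_mono) auto
  then show ?thesis
    using assms second_mixing_phase(2)[of v] second_mixing_phase(2)[of v'] gate_bounds[of u]
    unfolding mix_weight_def by (auto simp: min_def max_def)
qed

lemma profiles_const_in_u_first_mixing:
  assumes "1/5 \<le> v" "v \<le> 2/5" "fifth_ramp 1 v < gate u" "0 \<le> u" "u \<le> u'"
    "u' \<le> u + min ((gate u - fifth_ramp 1 v) / 8) (if u < 1/2 then 1/2 - u else 1)"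
  shows "mix_weight u' v = mix_weight u v \<and> fold_map u' v = fold_map u v"
proof -
  have "u' - u \<le> (gate u - fifth_ramp 1 v) / 8"
    using assms(6) min.cobounded1[of "(gate u - fifth_ramp 1 v) / 8"] by linarith
  moreover have "\<bar>u - u'\<bar> = u' - u"
    using assms(5) by simp
  ultimately have "8 * \<bar>u - u'\<bar> \<le> gate u - fifth_ramp 1 v"
    by simp
  then have "fifth_ramp 1 v \<le> gate u'"
    using abs_gate_diff_le[of u u'] by linarith
  moreover have "quarter_ramp 2 u' = quarter_ramp 2 u"
  proof (cases "u < 1/2")
    case True
    then have "min ((gate u - fifth_ramp 1 v) / 8) (if u < 1/2 then 1/2 - u else 1) \<le> 1/2 - u"
      by simp
    then have "u' \<le> 1/2"
      using assms(6) by linarith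
    then show ?thesis
      using True unfolding quarter_ramp_def ramp_def by auto
  next
    case False
    have "fifth_ramp 1 v \<ge> 0"
      by (rule fifth_ramp_bounds)
    then have "gate u > 0"
      using assms(3) by linarith
    then have "3/4 < u"
      using False unfolding gate_def quarter_ramp_def ramp_def by (auto simp: min_def max_def split: if_splits)
    then show ?thesis
      using assms(5) unfolding quarter_ramp_def ramp_def by auto
  qed
  ultimately show ?thesis
    using assms first_mixing_phase[of v] unfolding mix_weight_def by (auto simp: min_def max_def)
qed

lemma profiles_const_in_u_second_mixing:
  assumes "3/5 \<le> v" "v \<le> 4/5" "gate u < fifth_ramp 3 v" "0 \<le> u" "u \<le> u'"
    "u' \<le> u + (fifth_ramp 3 v - gate u) / 8"
  shows "mix_weight u' v = mix_weight u v \<and> fold_map u' v = fold_map u v"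
proof -
  have "u' - u \<le> (fifth_ramp 3 v - gate u) / 8"
    using assms(6) by linarith
  moreover have "\<bar>u - u'\<bar> = u' - u"
    using assms(5) by simp
  ultimately have "8 * \<bar>u - u'\<bar> \<le> fifth_ramp 3 v - gate u"
    by simp
  then have "gate u' \<le> fifth_ramp 3 v"
    using abs_gate_diff_le[of u u'] by linarith
  moreover have "1/4 < u"
  proof (rule ccontr)
    assume "\<not> 1/4 < u"
    then have "gate u = 1"
      unfolding gate_def quarter_ramp_def ramp_def by auto
    then show False
      using assms(3) fifth_ramp_bounds[of 3 v] by linarith
  qed
  then have "quarter_ramp 0 u' = quarter_ramp 0 u"
    using assms(5) unfolding quarter_ramp_def ramp_def by auto
  ultimately show ?thesis
    using assms second_mixing_phase[of v] gate_bounds[of u] gate_bounds[of u']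
    unfolding mix_weight_def by (auto simp: min_def max_def)
qed

lemma frozen_in_v_or_u_first_mixing:
  assumes "1/5 < v" "v < 2/5" "0 \<le> u" "u < 1"
  shows "frozen_in_v u v \<or> frozen_in_u u v"
proof (cases "gate u \<le> fifth_ramp 1 v")
  case True
  have "frozen_in_v u v"
  proof (rule frozen_in_vI[of "2/5 - v" 1])
    show "mix_weight u (v + 1 * h) = mix_weight u v" if "0 < h" "h < 2/5 - v" for h
      using mix_weight_const_in_v_first_mixing[of v "v + h" u] True assms that by simp
  qed (use assms in auto)
  then show ?thesis ..
next
  case False
  define r where "r = min (1 - u) (min ((gate u - fifth_ramp 1 v) / 8) (if u < 1/2 then 1/2 - u else 1))"
  have "frozen_in_u u v"
  proof (rule frozen_in_uI)
    show "0 < r" "r \<le> 1 - u"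
      unfolding r_def using False assms by auto
    show "plateau v = 1"
      using assms first_mixing_phase by simp
    show "mix_weight (u + h) v = mix_weight u v \<and> fold_map (u + h) v = fold_map u v"
      if "0 < h" "h < r" for h
      using profiles_const_in_u_first_mixing[of v u "u + h"] False assms that unfolding r_def by auto
  qed
  then show ?thesis ..
qed

lemma frozen_in_v_or_u_second_mixing:
  assumes "3/5 < v" "v < 4/5" "0 \<le> u" "u < 1"
  shows "frozen_in_v u v \<or> frozen_in_u u v"
proof (cases "fifth_ramp 3 v \<le> gate u")
  case True
  have "frozen_in_v u v"
  proof (rule frozen_in_vI[of "v - 3/5" "-1"])
    show "mix_weight u (v + -1 * h) = mix_weight u v" if "0 < h" "h < v - 3/5" for h
      using mix_weight_const_in_v_second_mixing[of "v - h" v u] True assms that by simp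
  qed (use assms in auto)
  then show ?thesis ..
next
  case False
  define r where "r = min (1 - u) ((fifth_ramp 3 v - gate u) / 8)"
  have "frozen_in_u u v"
  proof (rule frozen_in_uI)
    show "0 < r" "r \<le> 1 - u"
      unfolding r_def using False assms by auto
    show "plateau v = 1"
      using assms second_mixing_phase by simp
    show "mix_weight (u + h) v = mix_weight u v \<and> fold_map (u + h) v = fold_map u v"
      if "0 < h" "h < r" for h
      using profiles_const_in_u_second_mixing[of v u "u + h"] False assms that unfolding r_def by auto
  qed
  then show ?thesis ..
qed

lemma frozen_in_v_or_u:
  assumes "0 \<le> u" "u < 1" "0 < v" "v < 1" "v \<notin> {1/5, 2/5, 3/5, 4/5}"
  shows "frozen_in_v u v \<or> frozen_in_u u v"
proof -
  consider "v < 1/5 \<or> (2/5 < v \<and> v < 3/5) \<or> 4/5 < v" | "1/5 < v \<and> v < 2/5" | "3/5 < v \<and> v < 4/5"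
    using assms by force
  then show ?thesis
  proof cases
    case 1
    define r where "r = (if v < 1/5 then 1/5 - v else if v < 3/5 then 3/5 - v else 1)"
    have "frozen_in_v u v"
    proof (rule frozen_in_vI[of r 1])
      show "mix_weight u (v + 1 * h) = mix_weight u v" if "0 < h" "h < r" for h
        using 1 that mix_weight_const_outside_mixing[of v "v + h" u] unfolding r_def
        by (simp split: if_splits)
    qed (use 1 in \<open>auto simp: r_def\<close>)
    then show ?thesis ..
  next
    case 2
    then show ?thesis
      using frozen_in_v_or_u_first_mixing assms by blast
  next
    case 3
    then show ?thesis
      using frozen_in_v_or_u_second_mixing assms by blast
  qed
qed

section \<open>The folding homotopy\<close>

lemma abs_comp_frac_diff_le_ordered:
  fixes f :: "real \<Rightarrow> real"
  assumes "0 \<le> L"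
    and lip: "\<And>x y. 0 \<le> x \<Longrightarrow> x \<le> 1 \<Longrightarrow> 0 \<le> y \<Longrightarrow> y \<le> 1 \<Longrightarrow> \<bar>f x - f y\<bar> \<le> L * \<bar>x - y\<bar>"
    and ends: "f 0 = f 1" and "a \<le> b"
  shows "\<bar>f (frac a) - f (frac b)\<bar> \<le> 2 * L * (b - a)"
proof -
  have fa: "0 \<le> frac a" "frac a < 1" and fb: "0 \<le> frac b" "frac b < 1"
    using frac_lt_1 by auto
  have to_1: "\<bar>f (frac a) - f 1\<bar> \<le> L * (1 - frac a)"
    using lip[of "frac a" 1] fa by simp
  have from_0: "\<bar>f 0 - f (frac b)\<bar> \<le> L * frac b"
    using lip[of 0 "frac b"] fb by simp
  have via_ends: "\<bar>f (frac a) - f (frac b)\<bar> \<le> \<bar>f (frac a) - f 1\<bar> + \<bar>f 0 - f (frac b)\<bar>"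
    using ends by linarith
  consider "floor b = floor a" | "floor b = floor a + 1" "b - a < 1" | "1 \<le> b - a"
    using floor_mono[OF \<open>a \<le> b\<close>] floor_mono[of b "a + 1"] by force
  then show ?thesis
  proof cases
    case 1
    then have "\<bar>f (frac a) - f (frac b)\<bar> \<le> L * (b - a)"
      using lip[of "frac a" "frac b"] fa fb \<open>a \<le> b\<close> by (simp add: frac_def abs_minus_commute)
    also have "\<dots> \<le> 2 * L * (b - a)"
      using assms(1) \<open>a \<le> b\<close> by simp
    finally show ?thesis .
  next
    case 2
    have "\<bar>f (frac a) - f (frac b)\<bar> \<le> L * (1 - frac a) + L * frac b"
      using via_ends to_1 from_0 by linarith
    also have "\<dots> = L * (b - a)"
      using 2 by (simp add: frac_def algebra_simps)
    also have "\<dots> \<le> 2 * L * (b - a)"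
      using assms(1) \<open>a \<le> b\<close> by simp
    finally show ?thesis .
  next
    case 3
    have "L * (1 - frac a) \<le> L * 1" "L * frac b \<le> L * 1"
      using fa fb assms(1) by (simp_all add: mult_left_le)
    then have "\<bar>f (frac a) - f (frac b)\<bar> \<le> L * 1 + L * 1"
      using via_ends to_1 from_0 by linarith
    also have "\<dots> \<le> 2 * L * (b - a)"
      using assms(1) 3 by (simp add: mult_left_mono[of 1 "b - a" "2 * L", simplified])
    finally show ?thesis .
  qed
qed

lemma abs_comp_frac_diff_le:
  fixes f :: "real \<Rightarrow> real"
  assumes "0 \<le> L"
    and "\<And>x y. 0 \<le> x \<Longrightarrow> x \<le> 1 \<Longrightarrow> 0 \<le> y \<Longrightarrow> y \<le> 1 \<Longrightarrow> \<bar>f x - f y\<bar> \<le> L * \<bar>x - y\<bar>"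
    and "f 0 = f 1"
  shows "\<bar>f (frac x) - f (frac y)\<bar> \<le> 2 * L * \<bar>x - y\<bar>"
  using abs_comp_frac_diff_le_ordered[OF assms, of x y] abs_comp_frac_diff_le_ordered[OF assms, of y x]
  by (cases "x \<le> y") (simp_all add: abs_minus_commute)

definition cell_coord :: "real \<Rightarrow> real \<Rightarrow> real" where
  "cell_coord d \<theta> = frac (\<theta> / d)"

definition fold_param :: "real \<Rightarrow> real \<Rightarrow> real \<Rightarrow> real" where
  "fold_param d \<theta> v = \<theta> + d * fold_shift (cell_coord d \<theta>) v"

definition mix_param :: "real \<Rightarrow> real \<Rightarrow> real \<Rightarrow> real" where
  "mix_param d \<theta> v = mix_weight (cell_coord d \<theta>) v"

definition curve_interp :: "(real \<Rightarrow> 'a::real_vector) \<Rightarrow> (real \<Rightarrow> 'a) \<Rightarrow> real \<Rightarrow> real \<Rightarrow> 'a" where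
  "curve_interp c0 c1 x s = (1 - s) *\<^sub>R c0 x + s *\<^sub>R c1 x"

definition folding_homotopy ::
    "(real \<Rightarrow> 'a::real_vector) \<Rightarrow> (real \<Rightarrow> 'a) \<Rightarrow> real \<Rightarrow> real \<Rightarrow> real \<Rightarrow> 'a" where
  "folding_homotopy c0 c1 d \<theta> v = curve_interp c0 c1 (fold_param d \<theta> v) (mix_param d \<theta> v)"

lemma cell_coord_bounds: "0 \<le> cell_coord d \<theta>" "cell_coord d \<theta> < 1"
  unfolding cell_coord_def using frac_lt_1 by auto

lemma cell_coord_add:
  assumes "0 < d" "0 \<le> h" "h < d * (1 - cell_coord d \<theta>)"
  shows "cell_coord d (\<theta> + h) = cell_coord d \<theta> + h / d"
proof -
  have "0 \<le> h / d" "h / d < 1 - frac (\<theta> / d)"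
    using assms by (simp_all add: field_simps cell_coord_def)
  moreover have "h / d < 1"
    using \<open>h / d < 1 - frac (\<theta> / d)\<close> frac_ge_0[of "\<theta> / d"] by linarith
  ultimately have "frac (h / d) = h / d"
    by (simp add: frac_eq)
  then have "frac (\<theta> / d) + frac (h / d) < 1"
    using \<open>h / d < 1 - frac (\<theta> / d)\<close> by linarith
  with \<open>frac (h / d) = h / d\<close> show ?thesis
    unfolding cell_coord_def by (simp add: add_divide_distrib frac_add)
qed

lemma cell_coord_periodic:
  assumes "0 < M"
  shows "cell_coord (2 * pi / real M) (\<theta> + 2 * pi) = cell_coord (2 * pi / real M) \<theta>"
proof -
  have "(\<theta> + 2 * pi) / (2 * pi / real M) = \<theta> / (2 * pi / real M) + real M"
    using assms by (simp add: field_simps)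
  then show ?thesis
    unfolding cell_coord_def by (simp add: frac_add_int_right)
qed

lemma abs_fold_param_diff_le:
  assumes "0 < d"
  shows "\<bar>fold_param d \<theta> v - fold_param d \<theta>' v'\<bar> \<le> 11 * \<bar>\<theta> - \<theta>'\<bar> + 10 * d * \<bar>v - v'\<bar>"
proof -
  have "\<bar>fold_shift (cell_coord d \<theta>) v - fold_shift (cell_coord d \<theta>') v\<bar> \<le> 2 * 5 * \<bar>\<theta> / d - \<theta>' / d\<bar>"
    unfolding cell_coord_def
    by (rule abs_comp_frac_diff_le) (auto intro: abs_fold_shift_diff_le_u simp: fold_shift_cell_ends)
  also have "\<dots> = (10 / d) * \<bar>\<theta> - \<theta>'\<bar>"
    using assms by (simp add: diff_divide_distrib[symmetric] abs_divide)
  finally have "\<bar>fold_shift (cell_coord d \<theta>) v - fold_shift (cell_coord d \<theta>') v'\<bar> \<le>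
      (10 / d) * \<bar>\<theta> - \<theta>'\<bar> + 10 * \<bar>v - v'\<bar>"
    using abs_fold_shift_diff_le_v[of "cell_coord d \<theta>'" v v'] cell_coord_bounds[of d \<theta>'] by linarith
  then have "d * \<bar>fold_shift (cell_coord d \<theta>) v - fold_shift (cell_coord d \<theta>') v'\<bar> \<le>
      d * ((10 / d) * \<bar>\<theta> - \<theta>'\<bar> + 10 * \<bar>v - v'\<bar>)"
    using assms by (intro mult_left_mono) auto
  then have "d * \<bar>fold_shift (cell_coord d \<theta>) v - fold_shift (cell_coord d \<theta>') v'\<bar> \<le>
      10 * \<bar>\<theta> - \<theta>'\<bar> + 10 * d * \<bar>v - v'\<bar>"
    using assms by (simp add: algebra_simps)
  have "\<bar>fold_param d \<theta> v - fold_param d \<theta>' v'\<bar> \<le>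
      \<bar>\<theta> - \<theta>'\<bar> + d * \<bar>fold_shift (cell_coord d \<theta>) v - fold_shift (cell_coord d \<theta>') v'\<bar>"
    unfolding fold_param_def using assms
    by (metis (no_types, opaque_lifting) abs_mult abs_of_pos abs_triangle_ineq add_diff_add right_diff_distrib)
  also have "\<dots> \<le> \<bar>\<theta> - \<theta>'\<bar> + (10 * \<bar>\<theta> - \<theta>'\<bar> + 10 * d * \<bar>v - v'\<bar>)"
    by (rule add_left_mono) fact
  finally show ?thesis
    by simp
qed

lemma abs_mix_param_diff_le:
  assumes "0 < d"
  shows "\<bar>mix_param d \<theta> v - mix_param d \<theta>' v'\<bar> \<le> (16 / d) * \<bar>\<theta> - \<theta>'\<bar> + 5 * \<bar>v - v'\<bar>"
proof -
  have "\<bar>mix_weight (cell_coord d \<theta>) v - mix_weight (cell_coord d \<theta>') v\<bar> \<le> 2 * 8 * \<bar>\<theta> / d - \<theta>' / d\<bar>"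
    unfolding cell_coord_def
    by (rule abs_comp_frac_diff_le) (auto intro: abs_mix_weight_diff_le_u simp: mix_weight_cell_ends)
  also have "\<dots> = (16 / d) * \<bar>\<theta> - \<theta>'\<bar>"
    using assms by (simp add: diff_divide_distrib[symmetric] abs_divide)
  finally show ?thesis
    unfolding mix_param_def using abs_mix_weight_diff_le_v[of "cell_coord d \<theta>'" v v'] by linarith
qed

lemma abs_fold_param_le: "0 < d \<Longrightarrow> \<bar>fold_param d \<theta> v - \<theta>\<bar> \<le> d"
  unfolding fold_param_def using abs_fold_shift_le[of "cell_coord d \<theta>" v] cell_coord_bounds[of d \<theta>]
  by (simp add: abs_mult mult_left_le)

lemma lipschitz_on_pair_of_abs_diff_le:
  assumes "0 \<le> A" "0 \<le> B"
    and "\<And>\<theta> v \<theta>' v'. \<bar>f \<theta> v - f \<theta>' v'\<bar> \<le> A * \<bar>\<theta> - \<theta>'\<bar> + B * \<bar>v - v'\<bar>"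
  shows "(A + B)-lipschitz_on UNIV (\<lambda>p. f (fst p) (snd p))"
proof (rule lipschitz_onI)
  fix p q :: "real \<times> real"
  have "\<bar>f (fst p) (snd p) - f (fst q) (snd q)\<bar> \<le> A * \<bar>fst p - fst q\<bar> + B * \<bar>snd p - snd q\<bar>"
    by (rule assms(3))
  also have "\<dots> \<le> A * dist p q + B * dist p q"
    using dist_fst_le[of p q] dist_snd_le[of p q] assms(1,2)
    by (intro add_mono mult_left_mono) (auto simp: dist_real_def)
  finally show "dist (f (fst p) (snd p)) (f (fst q) (snd q)) \<le> (A + B) * dist p q"
    by (simp add: dist_real_def algebra_simps)
qed (use assms in simp)

lemma lipschitz_on_fold_param:
  "0 < d \<Longrightarrow> (11 + 10 * d)-lipschitz_on UNIV (\<lambda>p. fold_param d (fst p) (snd p))"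
  by (rule lipschitz_on_pair_of_abs_diff_le[OF _ _ abs_fold_param_diff_le]) auto

lemma lipschitz_on_mix_param:
  "0 < d \<Longrightarrow> (16 / d + 5)-lipschitz_on UNIV (\<lambda>p. mix_param d (fst p) (snd p))"
  by (rule lipschitz_on_pair_of_abs_diff_le[OF _ _ abs_mix_param_diff_le]) auto

lemma norm_curve_interp_diff_le:
  fixes c0 c1 :: "real \<Rightarrow> 'a::real_normed_vector"
  assumes "norm (c0 x' - c0 x) \<le> L * \<bar>x' - x\<bar>" "norm (c1 x' - c1 x) \<le> L * \<bar>x' - x\<bar>"
    and "norm (c0 x - c1 x) \<le> K" and "0 \<le> s'" "s' \<le> 1"
  shows "norm (curve_interp c0 c1 x' s' - curve_interp c0 c1 x s) \<le> L * \<bar>x' - x\<bar> + K * \<bar>s' - s\<bar>"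
proof -
  have "curve_interp c0 c1 x' s' - curve_interp c0 c1 x s =
      (1 - s') *\<^sub>R (c0 x' - c0 x) + s' *\<^sub>R (c1 x' - c1 x) + (s - s') *\<^sub>R (c0 x - c1 x)"
    unfolding curve_interp_def by (simp add: algebra_simps)
  then have "norm (curve_interp c0 c1 x' s' - curve_interp c0 c1 x s) \<le>
      norm ((1 - s') *\<^sub>R (c0 x' - c0 x)) + norm (s' *\<^sub>R (c1 x' - c1 x)) + norm ((s - s') *\<^sub>R (c0 x - c1 x))"
    by (metis norm_triangle_ineq order_trans add_right_mono)
  also have "\<dots> = (1 - s') * norm (c0 x' - c0 x) + s' * norm (c1 x' - c1 x) + \<bar>s' - s\<bar> * norm (c0 x - c1 x)"
    using assms(4,5) by (simp add: abs_minus_commute)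
  also have "\<dots> \<le> (1 - s') * (L * \<bar>x' - x\<bar>) + s' * (L * \<bar>x' - x\<bar>) + \<bar>s' - s\<bar> * K"
    using assms by (intro add_mono mult_left_mono) auto
  also have "\<dots> = L * \<bar>x' - x\<bar> + K * \<bar>s' - s\<bar>"
    by (simp add: algebra_simps)
  finally show ?thesis .
qed

lemma continuous_on_folding_homotopy:
  fixes c0 c1 :: "real \<Rightarrow> 'a::real_normed_vector"
  assumes "0 < d" "continuous_on UNIV c0" "continuous_on UNIV c1"
  shows "continuous_on UNIV (\<lambda>p. folding_homotopy c0 c1 d (fst p) (snd p))"
proof -
  have X: "continuous_on UNIV (\<lambda>p. fold_param d (fst p) (snd p))"
    using lipschitz_on_continuous_on[OF lipschitz_on_fold_param] assms(1) .
  have "continuous_on UNIV (\<lambda>p. mix_param d (fst p) (snd p))"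
    using lipschitz_on_continuous_on[OF lipschitz_on_mix_param] assms(1) .
  moreover have "continuous_on UNIV (\<lambda>p. c0 (fold_param d (fst p) (snd p)))"
    "continuous_on UNIV (\<lambda>p. c1 (fold_param d (fst p) (snd p)))"
    by (rule continuous_on_compose2[OF assms(2) X] continuous_on_compose2[OF assms(3) X]; simp)+
  ultimately show ?thesis
    unfolding folding_homotopy_def curve_interp_def by (intro continuous_intros)
qed

lemma lipschitz_on_folding_homotopy_strip:
  fixes c0 c1 :: "real \<Rightarrow> 'a::real_normed_vector"
  assumes d: "0 < d" "d \<le> 1"
    and lip0: "L-lipschitz_on {a..b} c0" and lip1: "L-lipschitz_on {a..b} c1"
    and "0 \<le> K" and gap: "\<And>x. x \<in> {a..b} \<Longrightarrow> norm (c0 x - c1 x) \<le> K"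
  shows "(L * (11 + 10 * d) + K * (16 / d + 5))-lipschitz_on ({a + 1..b - 1} \<times> UNIV)
    (\<lambda>p. folding_homotopy c0 c1 d (fst p) (snd p))"
proof (rule lipschitz_onI)
  show "0 \<le> L * (11 + 10 * d) + K * (16 / d + 5)"
    using lipschitz_on_nonneg[OF lip0] d \<open>0 \<le> K\<close> by auto
  let ?X = "\<lambda>p. fold_param d (fst p) (snd p)" and ?S = "\<lambda>p. mix_param d (fst p) (snd p)"
  fix p q :: "real \<times> real" assume p: "p \<in> {a + 1..b - 1} \<times> UNIV" and q: "q \<in> {a + 1..b - 1} \<times> UNIV"
  have window: "?X z \<in> {a..b}" if "z \<in> {a + 1..b - 1} \<times> UNIV" for z
    using that abs_fold_param_le[OF d(1), of "fst z" "snd z"] d by (auto simp: abs_le_iff)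
  have "norm (c0 (?X p) - c0 (?X q)) \<le> L * \<bar>?X p - ?X q\<bar>"
    "norm (c1 (?X p) - c1 (?X q)) \<le> L * \<bar>?X p - ?X q\<bar>"
    using lipschitz_onD[OF lip0] lipschitz_onD[OF lip1] window p q by (simp_all add: dist_norm dist_real_def)
  then have "norm (folding_homotopy c0 c1 d (fst p) (snd p) - folding_homotopy c0 c1 d (fst q) (snd q))
      \<le> L * \<bar>?X p - ?X q\<bar> + K * \<bar>?S p - ?S q\<bar>"
    unfolding folding_homotopy_def
    by (rule norm_curve_interp_diff_le) (use gap window q mix_weight_bounds in \<open>auto simp: mix_param_def\<close>)
  also have "\<dots> \<le> L * ((11 + 10 * d) * dist p q) + K * ((16 / d + 5) * dist p q)"
    using lipschitz_onD[OF lipschitz_on_fold_param[OF d(1)], of p q]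
      lipschitz_onD[OF lipschitz_on_mix_param[OF d(1)], of p q]
      lipschitz_on_nonneg[OF lip0] \<open>0 \<le> K\<close>
    by (intro add_mono mult_left_mono) (auto simp: dist_real_def)
  finally show "dist (folding_homotopy c0 c1 d (fst p) (snd p)) (folding_homotopy c0 c1 d (fst q) (snd q))
      \<le> (L * (11 + 10 * d) + K * (16 / d + 5)) * dist p q"
    by (simp add: dist_norm algebra_simps)
qed

lemma smooth_curve_continuous:
  assumes "smooth_curve c"
  shows "continuous_on UNIV c"
proof -
  obtain D where "D 0 = c" "\<And>k t. (D k has_vector_derivative D (Suc k) t) (at t)"
    using assms unfolding smooth_curve_def by blast
  then show ?thesis
    by (metis continuous_at_imp_continuous_on has_vector_derivative_continuous)
qed

lemma smooth_curve_lipschitz_on_interval: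
  fixes c :: "real \<Rightarrow> 'a::real_normed_vector"
  assumes "smooth_curve c"
  obtains L where "L-lipschitz_on {a..b} c"
proof -
  obtain D where D0: "D 0 = c" and D: "\<And>k t. (D k has_vector_derivative D (Suc k) t) (at t)"
    using assms unfolding smooth_curve_def by blast
  have "continuous_on {a..b} (D 1)"
    using D by (metis continuous_at_imp_continuous_on has_vector_derivative_continuous)
  then have "bounded (D 1 ` {a..b})"
    by (intro compact_imp_bounded compact_continuous_image) auto
  then obtain B where B: "0 < B" "\<And>t. t \<in> {a..b} \<Longrightarrow> norm (D 1 t) \<le> B"
    unfolding bounded_pos by blast
  have "B-lipschitz_on {a..b} c"
  proof (rule bounded_derivative_imp_lipschitz)
    show "(c has_derivative (\<lambda>h. h *\<^sub>R D 1 t)) (at t within {a..b})" for t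
      using D[of 0 t] D0 by (auto simp: has_vector_derivative_def intro: has_derivative_at_withinI)
    show "onorm (\<lambda>h. h *\<^sub>R D 1 t) \<le> B" if "t \<in> {a..b}" for t
      using B(2)[OF that] by (simp add: onorm_scaleR_left onorm_id bounded_linear_ident)
  qed (use B in auto)
  then show ?thesis ..
qed

lemma smooth_curves_lipschitz_on_interval:
  fixes c0 c1 :: "real \<Rightarrow> 'a::real_normed_vector"
  assumes "smooth_curve c0" "smooth_curve c1"
  obtains L K where "L-lipschitz_on {a..b} c0" "L-lipschitz_on {a..b} c1"
    "0 \<le> K" "\<And>x. x \<in> {a..b} \<Longrightarrow> norm (c0 x - c1 x) \<le> K"
proof -
  obtain L0 L1 where "L0-lipschitz_on {a..b} c0" "L1-lipschitz_on {a..b} c1"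
    using smooth_curve_lipschitz_on_interval assms by metis
  then have "(max L0 L1)-lipschitz_on {a..b} c0" "(max L0 L1)-lipschitz_on {a..b} c1"
    by (auto intro: lipschitz_on_mono)
  moreover have "continuous_on {a..b} (\<lambda>x. c0 x - c1 x)"
    using smooth_curve_continuous[OF assms(1)] smooth_curve_continuous[OF assms(2)]
    by (auto intro!: continuous_intros intro: continuous_on_subset)
  then have "bounded ((\<lambda>x. c0 x - c1 x) ` {a..b})"
    by (intro compact_imp_bounded compact_continuous_image) auto
  then obtain K where "0 < K" "\<And>x. x \<in> {a..b} \<Longrightarrow> norm (c0 x - c1 x) \<le> K"
    unfolding bounded_pos by blast
  ultimately show ?thesis
    using that[of "max L0 L1" K] by auto
qed

lemma folding_homotopy_periodic:
  assumes "0 < M" "periodic2pi c0" "periodic2pi c1"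
  shows "folding_homotopy c0 c1 (2 * pi / real M) (\<theta> + 2 * pi) v = folding_homotopy c0 c1 (2 * pi / real M) \<theta> v"
proof -
  let ?d = "2 * pi / real M"
  have "fold_param ?d (\<theta> + 2 * pi) v = fold_param ?d \<theta> v + 2 * pi"
    "mix_param ?d (\<theta> + 2 * pi) v = mix_param ?d \<theta> v"
    using cell_coord_periodic[OF assms(1)] by (simp_all add: fold_param_def mix_param_def)
  then show ?thesis
    using assms(2,3) by (simp add: folding_homotopy_def curve_interp_def periodic2pi_def)
qed

lemma folding_homotopy_boundary:
  "folding_homotopy c0 c1 d \<theta> 0 = c0 \<theta>" "folding_homotopy c0 c1 d \<theta> 1 = c1 \<theta>"
  by (simp_all add: folding_homotopy_def fold_param_def mix_param_def curve_interp_def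
      profiles_at_start profiles_at_end)

lemma locally_lipschitz_on_folding_homotopy:
  fixes c0 c1 :: "real \<Rightarrow> 'a::real_normed_vector"
  assumes "0 < d" "d \<le> 1" "smooth_curve c0" "smooth_curve c1"
  shows "locally_lipschitz_on S (\<lambda>(\<theta>, v). folding_homotopy c0 c1 d \<theta> v)"
  unfolding locally_lipschitz_on_def
proof
  fix p :: "real \<times> real"
  obtain L K where "L-lipschitz_on {fst p - 2..fst p + 2} c0" "L-lipschitz_on {fst p - 2..fst p + 2} c1"
    "0 \<le> K" "\<And>x. x \<in> {fst p - 2..fst p + 2} \<Longrightarrow> norm (c0 x - c1 x) \<le> K"
    using smooth_curves_lipschitz_on_interval assms(3,4) by metis
  from lipschitz_on_folding_homotopy_strip[OF assms(1,2) this]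
  have "(L * (11 + 10 * d) + K * (16 / d + 5))-lipschitz_on ({fst p - 1..fst p + 1} \<times> UNIV)
      (\<lambda>(\<theta>, v). folding_homotopy c0 c1 d \<theta> v)"
    by (simp add: case_prod_beta add.commute)
  moreover have "cball p 1 \<inter> S \<subseteq> {fst p - 1..fst p + 1} \<times> UNIV"
  proof
    fix q assume "q \<in> cball p 1 \<inter> S"
    then have "dist (fst p) (fst q) \<le> 1"
      using dist_fst_le[of p q] by (meson IntD1 mem_cball order_trans)
    then show "q \<in> {fst p - 1..fst p + 1} \<times> UNIV"
      by (cases q) (auto simp: dist_real_def abs_le_iff)
  qed
  ultimately have "(L * (11 + 10 * d) + K * (16 / d + 5))-lipschitz_on (cball p 1 \<inter> S)
      (\<lambda>(\<theta>, v). folding_homotopy c0 c1 d \<theta> v)"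
    by (rule lipschitz_on_subset)
  then show "\<exists>e>0. \<exists>L. L-lipschitz_on (cball p e \<inter> S) (\<lambda>(\<theta>, v). folding_homotopy c0 c1 d \<theta> v)"
    by (intro exI[of _ 1] exI) auto
qed

lemma folding_homotopy_in_homotopy_class:
  fixes c0 c1 :: "real \<Rightarrow> 'a::real_normed_vector"
  assumes c0: "smooth_regular_closed_curve c0" and c1: "smooth_regular_closed_curve c1"
    and "0 < M" and d: "d = 2 * pi / real M" "d \<le> 1"
  shows "folding_homotopy c0 c1 d \<in> homotopy_class c0 c1"
proof -
  have "periodic2pi c0" "smooth_curve c0" "periodic2pi c1" "smooth_curve c1"
    using c0 c1 unfolding smooth_regular_closed_curve_def by auto
  have "0 < d"
    using d \<open>0 < M\<close> by simp
  have "continuous_on (UNIV \<times> {0..1}) (\<lambda>p. folding_homotopy c0 c1 d (fst p) (snd p))"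
    using continuous_on_folding_homotopy[OF \<open>0 < d\<close>] smooth_curve_continuous
      \<open>smooth_curve c0\<close> \<open>smooth_curve c1\<close> continuous_on_subset by blast
  then show ?thesis
    using folding_homotopy_periodic[OF \<open>0 < M\<close> \<open>periodic2pi c0\<close> \<open>periodic2pi c1\<close>]
      locally_lipschitz_on_folding_homotopy[OF \<open>0 < d\<close> d(2) \<open>smooth_curve c0\<close> \<open>smooth_curve c1\<close>]
    unfolding homotopy_class_def d(1) by (simp add: case_prod_beta folding_homotopy_boundary)
qed

section \<open>The energy estimate\<close>

lemma folding_cost_le:
  fixes d L K :: real
  assumes "0 < d" "d \<le> 1" "0 \<le> L" "0 \<le> K"
  shows "(L * (11 + 10 * d) + K * (16 / d + 5)) * (10 * d * L)\<^sup>2 \<le> 2100 * L\<^sup>2 * (L + K) * d"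
proof -
  have "L * (11 + 10 * d) \<le> L * 21"
    using assms by (intro mult_left_mono) auto
  moreover have "K * (16 / d + 5) \<le> K * (21 / d)"
    using assms by (intro mult_left_mono) (auto simp: field_simps)
  ultimately have "L * (11 + 10 * d) + K * (16 / d + 5) \<le> 21 * (L + K / d)"
    by (simp add: algebra_simps)
  then have "(L * (11 + 10 * d) + K * (16 / d + 5)) * (10 * d * L)\<^sup>2 \<le> 21 * (L + K / d) * (10 * d * L)\<^sup>2"
    by (rule mult_right_mono) simp
  also have "\<dots> = 2100 * L\<^sup>2 * (L * d + K) * d"
    using assms(1) by (simp add: power2_eq_square field_simps)
  also have "\<dots> \<le> 2100 * L\<^sup>2 * (L + K) * d"
    using assms by (intro mult_right_mono mult_left_mono add_right_mono) (auto simp: mult_left_le)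
  finally show ?thesis .
qed

lemma null_sets_UNIV_times_finite:
  assumes "finite N"
  shows "UNIV \<times> N \<in> null_sets (lborel :: (real \<times> real) measure)"
proof -
  have "N \<in> null_sets lborel"
    using assms by (rule finite_imp_null_set_lborel)
  then have "UNIV \<times> N \<in> null_sets (lborel \<Otimes>\<^sub>M lborel)"
    by (intro lborel.times_in_null_sets2) auto
  then show ?thesis
    by (simp add: lborel_prod)
qed

lemma exists_cell_count:
  assumes "0 \<le> Q" "0 < \<epsilon>"
  obtains M :: nat where "0 < M" "2 * pi / M \<le> 1" "Q * (2 * pi / M) < \<epsilon>"
proof -
  obtain M :: nat where M: "2 * pi + 2 * pi * Q / \<epsilon> < M"
    using reals_Archimedean2 by blast
  moreover have "0 \<le> 2 * pi * Q / \<epsilon>"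
    using assms by simp
  ultimately have "2 * pi < M" "2 * pi * Q / \<epsilon> < M"
    using pi_gt_zero by linarith+
  then have "0 < M" "2 * pi * Q < M * \<epsilon>"
    using pos_divide_less_eq[OF assms(2)] pi_gt_zero by (auto intro: gr0I)
  moreover from this have "2 * pi * Q / M < \<epsilon>"
    by (simp add: pos_divide_less_eq mult.commute)
  ultimately show ?thesis
    using \<open>2 * pi < M\<close> by (intro that) (simp_all add: pos_divide_le_eq mult.commute)
qed

(* The window [-1, 2 pi + 2] contains every value of fold_param d theta v for theta in
   [0, 2 pi + 1], since the fold moves parameters by at most d <= 1. *)
locale folding_data =
  fixes c0 c1 :: "real \<Rightarrow> 'a::real_normed_vector" and d L K :: real
  assumes d_pos: "0 < d" and d_le_1: "d \<le> 1"
    and lipschitz0: "L-lipschitz_on {-1..2 * pi + 2} c0"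
    and lipschitz1: "L-lipschitz_on {-1..2 * pi + 2} c1"
    and K_nonneg: "0 \<le> K" and gap: "\<And>x. x \<in> {-1..2 * pi + 2} \<Longrightarrow> norm (c0 x - c1 x) \<le> K"
begin

lemma L_nonneg: "0 \<le> L"
  using lipschitz_on_nonneg[OF lipschitz0] .

lemma lipschitz_on_strip:
  "(L * (11 + 10 * d) + K * (16 / d + 5))-lipschitz_on ({0..2 * pi + 1} \<times> UNIV)
    (\<lambda>p. folding_homotopy c0 c1 d (fst p) (snd p))"
  using lipschitz_on_folding_homotopy_strip[OF d_pos d_le_1 lipschitz0 lipschitz1 K_nonneg gap] by (simp add: add.commute)

lemma norm_v_increment_le:
  assumes "\<theta> \<in> {0..2 * pi + 1}"
  shows "norm (folding_homotopy c0 c1 d \<theta> w - folding_homotopy c0 c1 d \<theta> v) \<le>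
    10 * d * L * \<bar>w - v\<bar> + K * \<bar>mix_weight (cell_coord d \<theta>) w - mix_weight (cell_coord d \<theta>) v\<bar>"
proof -
  let ?u = "cell_coord d \<theta>"
  have window: "fold_param d \<theta> x \<in> {-1..2 * pi + 2}" for x
    using abs_fold_param_le[OF d_pos, of \<theta> x] assms d_le_1 by (auto simp: abs_le_iff)
  have "\<bar>fold_param d \<theta> w - fold_param d \<theta> v\<bar> = d * \<bar>fold_shift ?u w - fold_shift ?u v\<bar>"
    unfolding fold_param_def using d_pos by (simp add: right_diff_distrib[symmetric] abs_mult)
  also have "\<dots> \<le> d * (10 * \<bar>w - v\<bar>)"
    using abs_fold_shift_diff_le_v[of ?u w v] cell_coord_bounds[of d \<theta>] d_pos
    by (intro mult_left_mono) auto
  finally have "L * \<bar>fold_param d \<theta> w - fold_param d \<theta> v\<bar> \<le> L * (d * (10 * \<bar>w - v\<bar>))"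
    by (rule mult_left_mono[OF _ L_nonneg])
  then have X: "L * \<bar>fold_param d \<theta> w - fold_param d \<theta> v\<bar> \<le> 10 * d * L * \<bar>w - v\<bar>"
    by (simp add: algebra_simps)
  have "norm (c0 (fold_param d \<theta> w) - c0 (fold_param d \<theta> v)) \<le> L * \<bar>fold_param d \<theta> w - fold_param d \<theta> v\<bar>"
    "norm (c1 (fold_param d \<theta> w) - c1 (fold_param d \<theta> v)) \<le> L * \<bar>fold_param d \<theta> w - fold_param d \<theta> v\<bar>"
    using lipschitz_onD[OF lipschitz0] lipschitz_onD[OF lipschitz1] window
    by (simp_all add: dist_norm dist_real_def)
  then have "norm (folding_homotopy c0 c1 d \<theta> w - folding_homotopy c0 c1 d \<theta> v) \<le>
      L * \<bar>fold_param d \<theta> w - fold_param d \<theta> v\<bar> + K * \<bar>mix_weight ?u w - mix_weight ?u v\<bar>"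
    unfolding folding_homotopy_def mix_param_def
    by (rule norm_curve_interp_diff_le) (use gap window mix_weight_bounds in auto)
  then show ?thesis
    using X by linarith
qed

lemma theta_const_if_frozen_in_u:
  assumes "frozen_in_u (cell_coord d \<theta>) v"
  obtains r where "0 < r" "\<And>h. 0 < h \<Longrightarrow> h < r \<Longrightarrow>
    folding_homotopy c0 c1 d (\<theta> + h) v = folding_homotopy c0 c1 d \<theta> v"
proof -
  let ?u = "cell_coord d \<theta>"
  obtain r where r: "0 < r" "r \<le> 1 - ?u"
    and frozen: "\<And>h. 0 < h \<Longrightarrow> h < r \<Longrightarrow>
      mix_weight (?u + h) v = mix_weight ?u v \<and> h + fold_shift (?u + h) v = fold_shift ?u v"
    using assms unfolding frozen_in_u_def by blast
  have "folding_homotopy c0 c1 d (\<theta> + h) v = folding_homotopy c0 c1 d \<theta> v" if "0 < h" "h < d * r" for h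
  proof -
    have "h / d < r"
      using that d_pos by (simp add: field_simps)
    moreover have "cell_coord d (\<theta> + h) = ?u + h / d"
      using that r d_pos by (intro cell_coord_add) (auto intro: order.strict_trans2 mult_left_mono)
    moreover have "0 < h / d"
      using that d_pos by simp
    ultimately have mix: "mix_weight (?u + h / d) v = mix_weight ?u v"
      and shift: "h / d + fold_shift (?u + h / d) v = fold_shift ?u v"
      and cell: "cell_coord d (\<theta> + h) = ?u + h / d"
      using frozen[of "h / d"] by blast+
    have "fold_param d (\<theta> + h) v = \<theta> + d * (h / d + fold_shift (?u + h / d) v)"
      using cell d_pos by (simp add: fold_param_def algebra_simps)
    also have "\<dots> = fold_param d \<theta> v"
      using shift by (simp add: fold_param_def)
    moreover have "mix_param d (\<theta> + h) v = mix_param d \<theta> v"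
      using cell mix by (simp add: mix_param_def)
    ultimately show ?thesis
      by (simp add: folding_homotopy_def)
  qed
  then show ?thesis
    using that[of "d * r"] r d_pos by simp
qed

lemma energy_density_le_if_frozen_in_v:
  assumes "\<theta> \<in> {0..2 * pi}" "frozen_in_v (cell_coord d \<theta>) v"
  shows "energy_density (folding_homotopy c0 c1 d) (\<theta>, v) \<le>
    (L * (11 + 10 * d) + K * (16 / d + 5)) * (10 * d * L)\<^sup>2"
proof -
  let ?C = "folding_homotopy c0 c1 d" and ?u = "cell_coord d \<theta>"
  obtain r s where "0 < r" "s = 1 \<or> s = -1"
    and frozen: "\<And>h. 0 < h \<Longrightarrow> h < r \<Longrightarrow> mix_weight ?u (v + s * h) = mix_weight ?u v"
    using assms(2) unfolding frozen_in_v_def by blast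
  show ?thesis
  proof (rule energy_density_le_of_one_sided_increments[of "min r 1" _ _ s])
    fix h assume h: "0 < h" "h < min r 1"
    then have "(\<theta> + h, v) \<in> {0..2 * pi + 1} \<times> UNIV" "(\<theta>, v) \<in> {0..2 * pi + 1} \<times> UNIV"
      using assms(1) by auto
    from lipschitz_onD[OF lipschitz_on_strip this]
    show "norm (?C (\<theta> + h) v - ?C \<theta> v) \<le> (L * (11 + 10 * d) + K * (16 / d + 5)) * h"
      using h by (simp add: dist_norm dist_prod_def)
    show "norm (?C \<theta> (v + s * h) - ?C \<theta> v) \<le> 10 * d * L * h"
      using norm_v_increment_le[of \<theta> "v + s * h" v] frozen[of h] h assms(1) \<open>s = 1 \<or> s = -1\<close>
      by auto
  qed (use \<open>0 < r\<close> L_nonneg K_nonneg d_pos \<open>s = 1 \<or> s = -1\<close> in auto)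
qed

lemma energy_density_eq_0_if_frozen_in_u:
  assumes "\<theta> \<in> {0..2 * pi}" "frozen_in_u (cell_coord d \<theta>) v"
  shows "energy_density (folding_homotopy c0 c1 d) (\<theta>, v) = 0"
proof -
  let ?C = "folding_homotopy c0 c1 d" and ?u = "cell_coord d \<theta>"
  obtain r where "0 < r" and const: "\<And>h. 0 < h \<Longrightarrow> h < r \<Longrightarrow> ?C (\<theta> + h) v = ?C \<theta> v"
    using theta_const_if_frozen_in_u[OF assms(2)] by blast
  have "energy_density ?C (\<theta>, v) \<le> 0 * (10 * d * L + 5 * K)\<^sup>2"
  proof (rule energy_density_le_of_one_sided_increments[of r _ _ 1])
    fix h assume h: "0 < h" "h < r"
    show "norm (?C (\<theta> + h) v - ?C \<theta> v) \<le> 0 * h"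
      using const[OF h] by simp
    have "\<bar>mix_weight ?u (v + 1 * h) - mix_weight ?u v\<bar> \<le> 5 * h"
      using abs_mix_weight_diff_le_v[of ?u "v + h" v] h by simp
    then show "norm (?C \<theta> (v + 1 * h) - ?C \<theta> v) \<le> (10 * d * L + 5 * K) * h"
      using norm_v_increment_le[of \<theta> "v + 1 * h" v] mult_left_mono[OF _ K_nonneg] h assms(1)
      by (fastforce simp: algebra_simps)
  qed (use \<open>0 < r\<close> L_nonneg K_nonneg d_pos in auto)
  moreover have "0 \<le> energy_density ?C (\<theta>, v)"
    by (simp add: energy_density_def)
  ultimately show ?thesis
    by simp
qed

lemma energy_density_le:
  assumes "\<theta> \<in> {0..2 * pi}" "0 < v" "v < 1" "v \<notin> {1/5, 2/5, 3/5, 4/5}"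
  shows "energy_density (folding_homotopy c0 c1 d) (\<theta>, v) \<le>
    (L * (11 + 10 * d) + K * (16 / d + 5)) * (10 * d * L)\<^sup>2"
proof -
  have "0 \<le> (L * (11 + 10 * d) + K * (16 / d + 5)) * (10 * d * L)\<^sup>2"
    using L_nonneg K_nonneg d_pos by auto
  with frozen_in_v_or_u[OF cell_coord_bounds[of d \<theta>] assms(2-4)] show ?thesis
    using energy_density_le_if_frozen_in_v[OF assms(1)] energy_density_eq_0_if_frozen_in_u[OF assms(1)]
    by auto
qed

lemma energy_le:
  "energy (folding_homotopy c0 c1 d) \<le> ennreal (2100 * L\<^sup>2 * (L + K) * (2 * pi) * d)"
proof -
  let ?C = "folding_homotopy c0 c1 d"
  define \<kappa> where "\<kappa> = (L * (11 + 10 * d) + K * (16 / d + 5)) * (10 * d * L)\<^sup>2"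
  have "0 \<le> \<kappa>"
    unfolding \<kappa>_def using L_nonneg K_nonneg d_pos by auto
  define I where "I = {0..2 * pi} \<times> {0..(1::real)}"
  define N where "N = {0, 1/5, 2/5, 3/5, 4/5, 1::real}"
  have "energy_density ?C p \<le> \<kappa>" if "p \<in> I" "p \<notin> UNIV \<times> N" for p
    using that energy_density_le unfolding I_def N_def \<kappa>_def by (cases p) auto
  then have pointwise: "ennreal (energy_density ?C p) * indicator I p \<le> ennreal \<kappa> * indicator I p"
    if "p \<notin> UNIV \<times> N" for p
    using that by (cases "p \<in> I") (simp_all add: ennreal_leI)
  have "AE p in lborel. ennreal (energy_density ?C p) * indicator I p \<le> ennreal \<kappa> * indicator I p"
  proof (rule AE_I'[OF null_sets_UNIV_times_finite])
    show "finite N"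
      by (simp add: N_def)
  qed (use pointwise in auto)
  then have "energy ?C \<le> (\<integral>\<^sup>+ p. ennreal \<kappa> * indicator I p \<partial>lborel)"
    unfolding energy_def I_def[symmetric] by (rule nn_integral_mono_AE)
  also have "\<dots> = ennreal \<kappa> * emeasure lborel I"
    by (rule nn_integral_cmult_indicator) (simp add: I_def borel_closed closed_Times)
  also have "\<dots> = ennreal (\<kappa> * (2 * pi))"
    unfolding I_def using \<open>0 \<le> \<kappa>\<close>
    by (simp add: lborel_prod[symmetric] lborel.emeasure_pair_measure_Times ennreal_mult)
  also have "\<dots> \<le> ennreal (2100 * L\<^sup>2 * (L + K) * d * (2 * pi))"
    unfolding \<kappa>_def
    by (intro ennreal_leI mult_right_mono folding_cost_le d_pos d_le_1 L_nonneg K_nonneg) simp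
  also have "\<dots> = ennreal (2100 * L\<^sup>2 * (L + K) * (2 * pi) * d)"
    by (simp add: mult_ac)
  finally show ?thesis .
qed

end

theorem mainTheorem14:
  fixes c0 c1 :: "real \<Rightarrow> real ^ 'n"
  assumes "CARD('n) \<ge> 2"
    and "smooth_regular_closed_curve c0"
    and "smooth_regular_closed_curve c1"
    and "(\<epsilon>::real) > 0"
  shows "\<exists>C \<in> homotopy_class c0 c1. energy_density C \<in> borel_measurable lborel \<and> energy C < ennreal \<epsilon>"
proof -
  have smooth: "smooth_curve c0" "smooth_curve c1"
    using assms(2,3) unfolding smooth_regular_closed_curve_def by auto
  then obtain L K where lip: "L-lipschitz_on {-1..2 * pi + 2} c0" "L-lipschitz_on {-1..2 * pi + 2} c1"
    and gap: "0 \<le> K" "\<And>x. x \<in> {-1..2 * pi + 2} \<Longrightarrow> norm (c0 x - c1 x) \<le> K"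
    using smooth_curves_lipschitz_on_interval[where a = "-1" and b = "2 * pi + 2"] by metis
  define Q where "Q = 2100 * L\<^sup>2 * (L + K) * (2 * pi)"
  have "0 \<le> Q"
    unfolding Q_def using lipschitz_on_nonneg[OF lip(1)] gap(1) by simp
  then obtain M :: nat where M: "0 < M" "2 * pi / M \<le> 1" "Q * (2 * pi / M) < \<epsilon>"
    using exists_cell_count assms(4) by blast
  define d where "d = 2 * pi / real M"
  interpret folding_data c0 c1 d L K
    using lip gap M by unfold_locales (auto simp: d_def)
  have "energy (folding_homotopy c0 c1 d) \<le> ennreal (Q * d)"
    using energy_le unfolding Q_def .
  also have "\<dots> < ennreal \<epsilon>"
    using M(3) assms(4) by (intro ennreal_lessI) (simp_all add: d_def)
  finally show ?thesis
    using folding_homotopy_in_homotopy_class[OF assms(2,3) M(1) d_def M(2)[folded d_def]]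
      borel_measurable_energy_density[OF continuous_on_folding_homotopy[OF d_pos
        smooth_curve_continuous smooth_curve_continuous, OF smooth]]
    by blast
qed

end
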